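(* Let $C_1\subseteq V^n$ and $C_2\subseteq V^m$ be irreducible closed sets in the PQF-topology. Then $C_1\times C_2$ is irreducible (in the PQF-topology on $V^{n+m}$).
   Context: $F$ is an algebraically closed field of characteristic $0$, $V$ a vector space over $\mathbb{Q}$, and $\exp:(V,+)\to(F^*,\cdot)$ a surjective group homomorphism with kernel $K\cong\mathbb{Z}$. The structure $V$ is considered in the language $\{0,+,(f_q)_{q\in\mathbb{Q}},R_+,R_0\}$ where $f_q$ is scalar multiplication by $q$, $R_+(v_1,v_2,v_3)$ iff $\exp(v_1)+\exp(v_2)=\exp(v_3)$ and $R_0(v_1,v_2)$ iff $\exp(v_1)+\exp(v_2)=0$. The PQF-topology on $V^n$: the basic closed sets are the subsets of $V^n$ definable by positive (negation-free) quantifier-free first-order formulas with parameters; closed sets are intersections of basic closed sets. A nonempty closed set is irreducible if it is not the union of two proper closed subsets. *)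

theory Defs
  imports Main "HOL-Computational_Algebra.Polynomial"
begin

definition alg_closed :: "'f::field itself \<Rightarrow> bool" where
  "alg_closed _ \<longleftrightarrow> (\<forall>p::'f poly. degree p > 0 \<longrightarrow> (\<exists>x. poly p x = 0))"

definition exp_setting :: "(rat \<Rightarrow> 'v::ab_group_add \<Rightarrow> 'v) \<Rightarrow> ('v \<Rightarrow> 'f::field_char_0) \<Rightarrow> bool" where
  "exp_setting sm ex \<longleftrightarrow>
     alg_closed TYPE('f) \<and>
     vector_space sm \<and>
     (\<forall>u v. ex (u + v) = ex u * ex v) \<and>
     (\<forall>v. ex v \<noteq> 0) \<and>
     (\<forall>y. y \<noteq> 0 \<longrightarrow> (\<exists>v. ex v = y)) \<and>
     (\<exists>k. k \<noteq> 0 \<and> {v. ex v = 1} = range (\<lambda>z::int. sm (of_int z) k))"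

datatype 'v trm = Var nat | Par 'v | Zero | Plus "'v trm" "'v trm" | Smul rat "'v trm"

datatype 'v pfm = TT | FF | Eq "'v trm" "'v trm" | Rplus "'v trm" "'v trm" "'v trm"
  | Rzero "'v trm" "'v trm" | Conj "'v pfm" "'v pfm" | Disj "'v pfm" "'v pfm"

fun tvars :: "'v trm \<Rightarrow> nat set" where
  "tvars (Var i) = {i}"
| "tvars (Par c) = {}"
| "tvars Zero = {}"
| "tvars (Plus s t) = tvars s \<union> tvars t"
| "tvars (Smul q t) = tvars t"

fun fvars :: "'v pfm \<Rightarrow> nat set" where
  "fvars TT = {}"
| "fvars FF = {}"
| "fvars (Eq s t) = tvars s \<union> tvars t"
| "fvars (Rplus s t u) = tvars s \<union> tvars t \<union> tvars u"
| "fvars (Rzero s t) = tvars s \<union> tvars t"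
| "fvars (Conj p q) = fvars p \<union> fvars q"
| "fvars (Disj p q) = fvars p \<union> fvars q"

fun teval :: "(rat \<Rightarrow> 'v::ab_group_add \<Rightarrow> 'v) \<Rightarrow> 'v list \<Rightarrow> 'v trm \<Rightarrow> 'v" where
  "teval sm xs (Var i) = xs ! i"
| "teval sm xs (Par c) = c"
| "teval sm xs Zero = 0"
| "teval sm xs (Plus s t) = teval sm xs s + teval sm xs t"
| "teval sm xs (Smul q t) = sm q (teval sm xs t)"

fun holds :: "(rat \<Rightarrow> 'v::ab_group_add \<Rightarrow> 'v) \<Rightarrow> ('v \<Rightarrow> 'f::field) \<Rightarrow> 'v list \<Rightarrow> 'v pfm \<Rightarrow> bool" where
  "holds sm ex xs TT = True"
| "holds sm ex xs FF = False"
| "holds sm ex xs (Eq s t) = (teval sm xs s = teval sm xs t)"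
| "holds sm ex xs (Rplus s t u) =
     (ex (teval sm xs s) + ex (teval sm xs t) = ex (teval sm xs u))"
| "holds sm ex xs (Rzero s t) = (ex (teval sm xs s) + ex (teval sm xs t) = 0)"
| "holds sm ex xs (Conj p q) = (holds sm ex xs p \<and> holds sm ex xs q)"
| "holds sm ex xs (Disj p q) = (holds sm ex xs p \<or> holds sm ex xs q)"

definition tuples :: "nat \<Rightarrow> 'v list set" where
  "tuples n = {xs. length xs = n}"

definition pqf_basic :: "(rat \<Rightarrow> 'v::ab_group_add \<Rightarrow> 'v) \<Rightarrow> ('v \<Rightarrow> 'f::field) \<Rightarrow> nat \<Rightarrow> 'v list set \<Rightarrow> bool" where
  "pqf_basic sm ex n S \<longleftrightarrow>
     (\<exists>\<phi>. fvars \<phi> \<subseteq> {..<n} \<and> S = {xs \<in> tuples n. holds sm ex xs \<phi>})"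

definition pqf_closed :: "(rat \<Rightarrow> 'v::ab_group_add \<Rightarrow> 'v) \<Rightarrow> ('v \<Rightarrow> 'f::field) \<Rightarrow> nat \<Rightarrow> 'v list set \<Rightarrow> bool" where
  "pqf_closed sm ex n S \<longleftrightarrow>
     (\<exists>\<F>. (\<forall>B\<in>\<F>. pqf_basic sm ex n B) \<and> S = tuples n \<inter> \<Inter>\<F>)"

definition pqf_irreducible :: "(rat \<Rightarrow> 'v::ab_group_add \<Rightarrow> 'v) \<Rightarrow> ('v \<Rightarrow> 'f::field) \<Rightarrow> nat \<Rightarrow> 'v list set \<Rightarrow> bool" where
  "pqf_irreducible sm ex n C \<longleftrightarrow>
     pqf_closed sm ex n C \<and> C \<noteq> {} \<and>
     \<not> (\<exists>A B. pqf_closed sm ex n A \<and> pqf_closed sm ex n B \<and> A \<subset> C \<and> B \<subset> C \<and> C = A \<union> B)"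

definition tuple_prod :: "'v list set \<Rightarrow> 'v list set \<Rightarrow> 'v list set" where
  "tuple_prod C1 C2 = {xs @ ys | xs ys. xs \<in> C1 \<and> ys \<in> C2}"

end

theory Submission
  imports Defs
begin

text \<open>Irreducibility is a purely topological property here: the proof uses only that
  the PQF-closed sets are closed under intersections and under preimages of maps given
  by terms (coordinate projections and inserting parameters).

  Suppose \<open>C\<^sub>1 \<times> C\<^sub>2 \<subseteq> A \<union> B\<close> with \<open>A\<close>, \<open>B\<close> closed. For each \<open>x \<in> C\<^sub>1\<close> the fibre
  \<open>{y. x @ y \<in> A}\<close> is closed, so by irreducibility \<open>C\<^sub>2\<close> lies in the \<open>A\<close>-fibre or the
  \<open>B\<close>-fibre of \<open>x\<close>. The sets of \<open>x\<close> for which the first, resp. second, alternative holds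
  are intersections of closed slices \<open>{x. x @ y \<in> A}\<close>, \<open>y \<in> C\<^sub>2\<close>, hence closed, and they
  cover \<open>C\<^sub>1\<close>; irreducibility of \<open>C\<^sub>1\<close> gives \<open>C\<^sub>1 \<times> C\<^sub>2 \<subseteq> A\<close> or \<open>C\<^sub>1 \<times> C\<^sub>2 \<subseteq> B\<close>.\<close>

fun tsubst :: "(nat \<Rightarrow> 'v trm) \<Rightarrow> 'v trm \<Rightarrow> 'v trm" where
  "tsubst f (Var i) = f i"
| "tsubst f (Par c) = Par c"
| "tsubst f Zero = Zero"
| "tsubst f (Plus s t) = Plus (tsubst f s) (tsubst f t)"
| "tsubst f (Smul q t) = Smul q (tsubst f t)"

fun psubst :: "(nat \<Rightarrow> 'v trm) \<Rightarrow> 'v pfm \<Rightarrow> 'v pfm" where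
  "psubst f TT = TT"
| "psubst f FF = FF"
| "psubst f (Eq s t) = Eq (tsubst f s) (tsubst f t)"
| "psubst f (Rplus s t u) = Rplus (tsubst f s) (tsubst f t) (tsubst f u)"
| "psubst f (Rzero s t) = Rzero (tsubst f s) (tsubst f t)"
| "psubst f (Conj p q) = Conj (psubst f p) (psubst f q)"
| "psubst f (Disj p q) = Disj (psubst f p) (psubst f q)"

lemma teval_tsubst:
  "(\<And>i. i \<in> tvars t \<Longrightarrow> teval sm xs (f i) = ys ! i) \<Longrightarrow> teval sm xs (tsubst f t) = teval sm ys t"
  by (induction t) auto

lemma holds_psubst:
  "(\<And>i. i \<in> fvars p \<Longrightarrow> teval sm xs (f i) = ys ! i) \<Longrightarrow>
    holds sm ex xs (psubst f p) = holds sm ex ys p"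
  by (induction p) (auto simp: teval_tsubst)

lemma tvars_tsubst: "tvars (tsubst f t) \<subseteq> (\<Union>i\<in>tvars t. tvars (f i))"
  by (induction t) auto

lemma fvars_psubst: "fvars (psubst f p) \<subseteq> (\<Union>i\<in>fvars p. tvars (f i))"
  using tvars_tsubst by (induction p) (simp_all, blast+)

lemma pqf_closed_subset_tuples: "pqf_closed sm ex k S \<Longrightarrow> S \<subseteq> tuples k"
  unfolding pqf_closed_def by auto

lemma pqf_closed_Inter:
  assumes "\<And>S. S \<in> SS \<Longrightarrow> pqf_closed sm ex k S"
  shows "pqf_closed sm ex k (tuples k \<inter> \<Inter>SS)"
proof -
  have "\<forall>S\<in>SS. \<exists>F. (\<forall>B\<in>F. pqf_basic sm ex k B) \<and> S = tuples k \<inter> \<Inter>F"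
    using assms unfolding pqf_closed_def by blast
  then obtain F where F: "\<And>S. S \<in> SS \<Longrightarrow> (\<forall>B\<in>F S. pqf_basic sm ex k B) \<and> S = tuples k \<inter> \<Inter>(F S)"
    by metis
  have "tuples k \<inter> \<Inter>SS = tuples k \<inter> \<Inter>(\<Union>S\<in>SS. F S)"
  proof (intro set_eqI iffI)
    fix x assume "x \<in> tuples k \<inter> \<Inter>SS"
    then show "x \<in> tuples k \<inter> \<Inter>(\<Union>S\<in>SS. F S)"
      using F by blast
  next
    fix x assume x: "x \<in> tuples k \<inter> \<Inter>(\<Union>S\<in>SS. F S)"
    have "x \<in> S" if "S \<in> SS" for S
      using x F[OF that] that by blast
    with x show "x \<in> tuples k \<inter> \<Inter>SS"
      by blast
  qed
  moreover have "\<forall>B\<in>(\<Union>S\<in>SS. F S). pqf_basic sm ex k B"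
    using F by blast
  ultimately show ?thesis
    unfolding pqf_closed_def by (intro exI[of _ "\<Union>S\<in>SS. F S"] conjI)
qed

lemma pqf_closed_Int:
  assumes "pqf_closed sm ex k A" "pqf_closed sm ex k B"
  shows "pqf_closed sm ex k (A \<inter> B)"
proof -
  have "A \<inter> B = tuples k \<inter> \<Inter>{A, B}"
    using pqf_closed_subset_tuples[OF assms(1)] by auto
  then show ?thesis
    using pqf_closed_Inter[of "{A, B}" sm ex k] assms by (metis insert_iff singletonD)
qed

text \<open>Maps \<open>g : V\<^sup>k \<rightarrow> V\<^sup>N\<close> whose coordinates are given by terms \<open>f i\<close> are continuous:
  the preimage of a basic set is defined by the substituted formula.\<close>

lemma pqf_basic_preimage:
  assumes B: "pqf_basic sm ex N B"
    and g: "\<And>zs. zs \<in> tuples k \<Longrightarrow> g zs \<in> tuples N"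
    and f_vars: "\<And>i. i < N \<Longrightarrow> tvars (f i) \<subseteq> {..<k}"
    and f_eval: "\<And>zs i. zs \<in> tuples k \<Longrightarrow> i < N \<Longrightarrow> teval sm zs (f i) = g zs ! i"
  shows "pqf_basic sm ex k {zs \<in> tuples k. g zs \<in> B}"
proof -
  obtain \<phi> where \<phi>: "fvars \<phi> \<subseteq> {..<N}" "B = {xs \<in> tuples N. holds sm ex xs \<phi>}"
    using B unfolding pqf_basic_def by blast
  have "fvars (psubst f \<phi>) \<subseteq> {..<k}"
    using fvars_psubst[of f \<phi>] \<phi>(1) f_vars by blast
  moreover have "{zs \<in> tuples k. g zs \<in> B} = {zs \<in> tuples k. holds sm ex zs (psubst f \<phi>)}"
  proof -
    have "holds sm ex zs (psubst f \<phi>) = holds sm ex (g zs) \<phi>" if "zs \<in> tuples k" for zs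
      using \<phi>(1) f_eval[OF that] by (intro holds_psubst) blast
    then show ?thesis
      using \<phi>(2) g by auto
  qed
  ultimately show ?thesis
    unfolding pqf_basic_def by blast
qed

lemma pqf_closed_preimage:
  assumes S: "pqf_closed sm ex N S"
    and g: "\<And>zs. zs \<in> tuples k \<Longrightarrow> g zs \<in> tuples N"
    and f_vars: "\<And>i. i < N \<Longrightarrow> tvars (f i) \<subseteq> {..<k}"
    and f_eval: "\<And>zs i. zs \<in> tuples k \<Longrightarrow> i < N \<Longrightarrow> teval sm zs (f i) = g zs ! i"
  shows "pqf_closed sm ex k {zs \<in> tuples k. g zs \<in> S}"
proof -
  obtain F where F: "\<forall>B\<in>F. pqf_basic sm ex N B" "S = tuples N \<inter> \<Inter>F"
    using S unfolding pqf_closed_def by blast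
  let ?F' = "(\<lambda>B. {zs \<in> tuples k. g zs \<in> B}) ` F"
  have "{zs \<in> tuples k. g zs \<in> S} = tuples k \<inter> \<Inter>?F'"
    using F(2) g by blast
  moreover have "\<forall>B'\<in>?F'. pqf_basic sm ex k B'"
    using F(1) pqf_basic_preimage[OF _ g f_vars f_eval] by blast
  ultimately show ?thesis
    unfolding pqf_closed_def by blast
qed

lemma pqf_closed_take:
  "pqf_closed sm ex n C \<Longrightarrow> pqf_closed sm ex (n + m) {zs \<in> tuples (n + m). take n zs \<in> C}"
  by (erule pqf_closed_preimage[where f = Var]) (auto simp: tuples_def)

lemma pqf_closed_drop:
  "pqf_closed sm ex m C \<Longrightarrow> pqf_closed sm ex (n + m) {zs \<in> tuples (n + m). drop n zs \<in> C}"
  by (erule pqf_closed_preimage[where f = "\<lambda>i. Var (i + n)"]) (auto simp: tuples_def add.commute)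

lemma pqf_closed_slice_right:
  assumes "pqf_closed sm ex (n + m) A" "x \<in> tuples n"
  shows "pqf_closed sm ex m {y \<in> tuples m. x @ y \<in> A}"
  by (rule pqf_closed_preimage[OF assms(1),
        where f = "\<lambda>i. if i < n then Par (x ! i) else Var (i - n)"])
     (use assms(2) in \<open>auto simp: tuples_def nth_append\<close>)

lemma pqf_closed_slice_left:
  assumes "pqf_closed sm ex (n + m) A" "y \<in> tuples m"
  shows "pqf_closed sm ex n {x \<in> tuples n. x @ y \<in> A}"
  by (rule pqf_closed_preimage[OF assms(1),
        where f = "\<lambda>i. if i < n then Var i else Par (y ! (i - n))"])
     (use assms(2) in \<open>auto simp: tuples_def nth_append\<close>)

lemma pqf_irreducible_subset_Un:
  assumes C: "pqf_irreducible sm ex k C"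
    and "pqf_closed sm ex k A" "pqf_closed sm ex k B" "C \<subseteq> A \<union> B"
  shows "C \<subseteq> A \<or> C \<subseteq> B"
proof (rule ccontr)
  assume "\<not> (C \<subseteq> A \<or> C \<subseteq> B)"
  then have "A \<inter> C \<subset> C" "B \<inter> C \<subset> C" "C = (A \<inter> C) \<union> (B \<inter> C)"
    using assms(4) by auto
  moreover have "pqf_closed sm ex k (A \<inter> C)" "pqf_closed sm ex k (B \<inter> C)"
    using C assms(2,3) by (auto intro: pqf_closed_Int simp: pqf_irreducible_def)
  ultimately show False
    using C unfolding pqf_irreducible_def by blast
qed

lemma tuple_prod_eq_take_drop:
  assumes "C1 \<subseteq> tuples n" "C2 \<subseteq> tuples m"
  shows "tuple_prod C1 C2 =
    {zs \<in> tuples (n + m). take n zs \<in> C1} \<inter> {zs \<in> tuples (n + m). drop n zs \<in> C2}"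
proof (intro set_eqI iffI)
  fix zs assume "zs \<in> tuple_prod C1 C2"
  then obtain x y where "zs = x @ y" "x \<in> C1" "y \<in> C2"
    unfolding tuple_prod_def by blast
  with assms show "zs \<in> {zs \<in> tuples (n + m). take n zs \<in> C1} \<inter> {zs \<in> tuples (n + m). drop n zs \<in> C2}"
    by (auto simp: tuples_def)
next
  fix zs assume "zs \<in> {zs \<in> tuples (n + m). take n zs \<in> C1} \<inter> {zs \<in> tuples (n + m). drop n zs \<in> C2}"
  then have "take n zs \<in> C1" "drop n zs \<in> C2" "zs = take n zs @ drop n zs"
    by auto
  then show "zs \<in> tuple_prod C1 C2"
    unfolding tuple_prod_def by blast
qed

lemma pqf_closed_tuple_prod:
  assumes "pqf_closed sm ex n C1" "pqf_closed sm ex m C2"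
  shows "pqf_closed sm ex (n + m) (tuple_prod C1 C2)"
  unfolding tuple_prod_eq_take_drop[OF assms[THEN pqf_closed_subset_tuples]]
  using assms by (intro pqf_closed_Int pqf_closed_take pqf_closed_drop)

lemma tuple_prod_subset_Un:
  assumes C1: "pqf_irreducible sm ex n C1" and C2: "pqf_irreducible sm ex m C2"
    and A: "pqf_closed sm ex (n + m) A" and B: "pqf_closed sm ex (n + m) B"
    and prod: "tuple_prod C1 C2 \<subseteq> A \<union> B"
  shows "tuple_prod C1 C2 \<subseteq> A \<or> tuple_prod C1 C2 \<subseteq> B"
proof -
  have C1_tuples: "C1 \<subseteq> tuples n" and C2_tuples: "C2 \<subseteq> tuples m"
    using C1 C2 by (auto simp: pqf_irreducible_def dest: pqf_closed_subset_tuples)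
  define good where "good D = tuples n \<inter> \<Inter>((\<lambda>y. {x \<in> tuples n. x @ y \<in> D}) ` C2)" for D
  have good_closed: "pqf_closed sm ex n (good D)" if "pqf_closed sm ex (n + m) D" for D
    unfolding good_def
    using pqf_closed_slice_left[OF that] C2_tuples by (intro pqf_closed_Inter) blast
  have "C1 \<subseteq> good A \<union> good B"
  proof
    fix x assume x: "x \<in> C1"
    then have x_tuple: "x \<in> tuples n"
      using C1_tuples by blast
    have "C2 \<subseteq> {y \<in> tuples m. x @ y \<in> A} \<union> {y \<in> tuples m. x @ y \<in> B}"
      using x prod C2_tuples unfolding tuple_prod_def by blast
    then have "C2 \<subseteq> {y \<in> tuples m. x @ y \<in> A} \<or> C2 \<subseteq> {y \<in> tuples m. x @ y \<in> B}"
      using pqf_irreducible_subset_Un[OF C2] pqf_closed_slice_right[OF A x_tuple]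
        pqf_closed_slice_right[OF B x_tuple] by blast
    then show "x \<in> good A \<union> good B"
      using x_tuple unfolding good_def by blast
  qed
  then have "C1 \<subseteq> good A \<or> C1 \<subseteq> good B"
    by (intro pqf_irreducible_subset_Un[OF C1] good_closed A B)
  then show ?thesis
    unfolding good_def tuple_prod_def by blast
qed

theorem lemma5p17:
  fixes sm :: "rat \<Rightarrow> 'v::ab_group_add \<Rightarrow> 'v" and ex :: "'v \<Rightarrow> 'f::field_char_0"
    and n m :: nat and C1 C2 :: "'v list set"
  assumes "exp_setting sm ex"
    and "pqf_irreducible sm ex n C1"
    and "pqf_irreducible sm ex m C2"
  shows "pqf_irreducible sm ex (n + m) (tuple_prod C1 C2)"
proof -
  have "pqf_closed sm ex n C1" "C1 \<noteq> {}" "pqf_closed sm ex m C2" "C2 \<noteq> {}"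
    using assms(2,3) unfolding pqf_irreducible_def by simp_all
  then have "pqf_closed sm ex (n + m) (tuple_prod C1 C2)" "tuple_prod C1 C2 \<noteq> {}"
    by (simp_all add: pqf_closed_tuple_prod) (auto simp: tuple_prod_def)
  moreover have "\<not> (A \<subset> tuple_prod C1 C2 \<and> B \<subset> tuple_prod C1 C2)"
    if "pqf_closed sm ex (n + m) A" "pqf_closed sm ex (n + m) B" "tuple_prod C1 C2 = A \<union> B" for A B
    using tuple_prod_subset_Un[OF assms(2,3) that(1,2)] that(3) by blast
  ultimately show ?thesis
    unfolding pqf_irreducible_def by blast
qed

end
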